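(* Let $\Sigma$ be a finitary signature, $X$ a set, and fix $p\in X\cup\Sigma_0$. Then the cpo $\Psi_\Sigma X$ (all $\Sigma$-trees over $X$, ordered by cutting) is a conservative completion of its subposet $\Phi_\Sigma X$ of finite trees. Explicitly, for every continuous map $f\colon\Phi_\Sigma X\to Q$ into a cpo $Q$, the map $\bar f(s)=\bigsqcup_{n\in\mathbb N} f(\partial_n s)$ is the unique continuous map $\Psi_\Sigma X\to Q$ extending $f$.
   Context: A finitary signature is a sequence $\Sigma=(\Sigma_n)_{n\in\mathbb N}$ of sets. A $\Sigma$-tree is an ordered rooted tree, finite or infinite, with nodes labelled in $\bigcup_n\Sigma_n$ such that a node labelled by $\sigma\in\Sigma_n$ has exactly $n$ children (up to isomorphism). A $\Sigma$-tree over $X$ is a $(\Sigma+X)$-tree with elements of $X$ as nullary symbols. $\Psi_\Sigma X$: all $\Sigma$-trees over $X$; $\Phi_\Sigma X$: the finite ones. $\partial_n t$: delete all nodes of height $>n$ and relabel the remaining nodes of height $n$ by $p$. Order by cutting: $s\le s'$ iff $s=s'$ or $s=\partial_n s'$ for some $n$. A map between posets is continuous if it is monotone and preserves all existing directed joins. A conservative completion of a poset $P$ is a cpo $\bar P$ containing $P$ as a subposet closed under all directed joins existing in $P$, such that every continuous map $f\colon P\to Q$ into a cpo $Q$ has a unique continuous extension $\bar f\colon\bar P\to Q$. *)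

theory Defs
  imports Main
begin

(* Labels of Sigma-trees over X: an operation symbol sigma together with its arity n
   (meaning sigma \<in> \<Sigma> n), or a variable x \<in> X (a nullary symbol). *)
type_synonym ('s, 'x) lab = "('s \<times> nat) + 'x"

(* An ordered rooted tree (finite or infinite) is represented canonically by the partial map
   from positions (paths of child indices from the root) to labels. *)
type_synonym ('s, 'x) tree = "nat list \<Rightarrow> ('s, 'x) lab option"

definition is_tree :: "(nat \<Rightarrow> 's set) \<Rightarrow> 'x set \<Rightarrow> ('s, 'x) tree \<Rightarrow> bool" where
  "is_tree \<Sigma> X t \<longleftrightarrow>
     t [] \<noteq> None \<and>
     (\<forall>w i. t (w @ [i]) \<noteq> None \<longrightarrow> t w \<noteq> None) \<and>
     (\<forall>w \<sigma> n. t w = Some (Inl (\<sigma>, n)) \<longrightarrow> \<sigma> \<in> \<Sigma> n \<and> (\<forall>i. t (w @ [i]) \<noteq> None \<longleftrightarrow> i < n)) \<and>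
     (\<forall>w x. t w = Some (Inr x) \<longrightarrow> x \<in> X \<and> (\<forall>i. t (w @ [i]) = None))"

definition trees :: "(nat \<Rightarrow> 's set) \<Rightarrow> 'x set \<Rightarrow> ('s, 'x) tree set" where
  "trees \<Sigma> X = {t. is_tree \<Sigma> X t}"

definition finite_trees :: "(nat \<Rightarrow> 's set) \<Rightarrow> 'x set \<Rightarrow> ('s, 'x) tree set" where
  "finite_trees \<Sigma> X = {t. is_tree \<Sigma> X t \<and> finite (dom t)}"

definition nullary_labels :: "(nat \<Rightarrow> 's set) \<Rightarrow> 'x set \<Rightarrow> ('s, 'x) lab set" where
  "nullary_labels \<Sigma> X = Inr ` X \<union> (\<lambda>\<sigma>. Inl (\<sigma>, 0)) ` \<Sigma> 0"

definition cut :: "('s, 'x) lab \<Rightarrow> nat \<Rightarrow> ('s, 'x) tree \<Rightarrow> ('s, 'x) tree" where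
  "cut p n t = (\<lambda>w. if length w < n then t w
                    else if length w = n then (case t w of None \<Rightarrow> None | Some _ \<Rightarrow> Some p)
                    else None)"

definition cut_le :: "('s, 'x) lab \<Rightarrow> ('s, 'x) tree \<Rightarrow> ('s, 'x) tree \<Rightarrow> bool" where
  "cut_le p s t \<longleftrightarrow> s = t \<or> (\<exists>n. s = cut p n t)"

definition partial_order_on' :: "'a set \<Rightarrow> ('a \<Rightarrow> 'a \<Rightarrow> bool) \<Rightarrow> bool" where
  "partial_order_on' A le \<longleftrightarrow>
     (\<forall>x\<in>A. le x x) \<and>
     (\<forall>x\<in>A. \<forall>y\<in>A. le x y \<and> le y x \<longrightarrow> x = y) \<and>
     (\<forall>x\<in>A. \<forall>y\<in>A. \<forall>z\<in>A. le x y \<and> le y z \<longrightarrow> le x z)"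

definition directed :: "'a set \<Rightarrow> ('a \<Rightarrow> 'a \<Rightarrow> bool) \<Rightarrow> 'a set \<Rightarrow> bool" where
  "directed A le D \<longleftrightarrow> D \<subseteq> A \<and> D \<noteq> {} \<and> (\<forall>x\<in>D. \<forall>y\<in>D. \<exists>z\<in>D. le x z \<and> le y z)"

definition is_join :: "'a set \<Rightarrow> ('a \<Rightarrow> 'a \<Rightarrow> bool) \<Rightarrow> 'a set \<Rightarrow> 'a \<Rightarrow> bool" where
  "is_join A le D j \<longleftrightarrow> j \<in> A \<and> (\<forall>x\<in>D. le x j) \<and> (\<forall>u\<in>A. (\<forall>x\<in>D. le x u) \<longrightarrow> le j u)"

definition cpo :: "'a set \<Rightarrow> ('a \<Rightarrow> 'a \<Rightarrow> bool) \<Rightarrow> bool" where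
  "cpo A le \<longleftrightarrow> partial_order_on' A le \<and> (\<forall>D. directed A le D \<longrightarrow> (\<exists>j. is_join A le D j))"

definition continuous_map :: "'a set \<Rightarrow> ('a \<Rightarrow> 'a \<Rightarrow> bool) \<Rightarrow> 'b set \<Rightarrow> ('b \<Rightarrow> 'b \<Rightarrow> bool)
    \<Rightarrow> ('a \<Rightarrow> 'b) \<Rightarrow> bool" where
  "continuous_map A leA B leB f \<longleftrightarrow>
     f ` A \<subseteq> B \<and>
     (\<forall>x\<in>A. \<forall>y\<in>A. leA x y \<longrightarrow> leB (f x) (f y)) \<and>
     (\<forall>D j. directed A leA D \<and> is_join A leA D j \<longrightarrow> is_join B leB (f ` D) (f j))"

definition closed_under_directed_joins :: "'a set \<Rightarrow> 'a set \<Rightarrow> ('a \<Rightarrow> 'a \<Rightarrow> bool) \<Rightarrow> bool" where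
  "closed_under_directed_joins P Pbar le \<longleftrightarrow>
     (\<forall>D j. directed P le D \<and> is_join P le D j \<longrightarrow> is_join Pbar le D j)"

end

theory Submission
  imports Defs
begin

text \<open>
  Cuts compose as \<open>\<partial>\<^sub>m (\<partial>\<^sub>n t) = \<partial>\<^bsub>min m n\<^esub> t\<close>, so cutting is a partial order in which the cuts
  of a tree form a chain. A directed set \<open>D\<close> of trees without greatest element consists of
  proper cuts \<open>\<partial>\<^sub>n y\<close> of its members; their levels \<open>n\<close> are unbounded and any two of them agree
  below the smaller level, so they glue to a tree, the join of \<open>D\<close>. A finite tree is its own
  \<open>n\<close>-th cut for large \<open>n\<close>, hence a directed set with a finite join has a greatest element.
  Every cut of a directed join is a cut of a member, which makes \<open>s \<mapsto> \<Squnion>\<^sub>n f (\<partial>\<^sub>n s)\<close> continuous;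
  it is the only continuous extension of \<open>f\<close> because every tree is the directed join of its
  finite cuts.
\<close>

lemma is_join_unique:
  assumes "partial_order_on' A le" "is_join A le D a" "is_join A le D b"
  shows "a = b"
  using assms unfolding partial_order_on'_def is_join_def by blast

lemma partial_order_if_cpo: "cpo A le \<Longrightarrow> partial_order_on' A le"
  unfolding cpo_def by blast

lemma partial_order_on'_refl: "partial_order_on' A le \<Longrightarrow> x \<in> A \<Longrightarrow> le x x"
  unfolding partial_order_on'_def by blast

lemma partial_order_on'_trans:
  "partial_order_on' A le \<Longrightarrow> x \<in> A \<Longrightarrow> y \<in> A \<Longrightarrow> z \<in> A \<Longrightarrow> le x y \<Longrightarrow> le y z \<Longrightarrow> le x z"
  unfolding partial_order_on'_def by blast

lemma directed_subset: "directed A le D \<Longrightarrow> A \<subseteq> B \<Longrightarrow> directed B le D"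
  unfolding directed_def by blast

lemma continuous_map_into: "continuous_map A leA B leB f \<Longrightarrow> x \<in> A \<Longrightarrow> f x \<in> B"
  unfolding continuous_map_def by blast

lemma continuous_map_mono:
  "continuous_map A leA B leB f \<Longrightarrow> x \<in> A \<Longrightarrow> y \<in> A \<Longrightarrow> leA x y \<Longrightarrow> leB (f x) (f y)"
  unfolding continuous_map_def by blast

lemma continuous_map_join:
  "continuous_map A leA B leB f \<Longrightarrow> directed A leA D \<Longrightarrow> is_join A leA D j
    \<Longrightarrow> is_join B leB (f ` D) (f j)"
  unfolding continuous_map_def by blast


section \<open>Cuts and the cut order\<close>

lemma cut_cut: "cut p m (cut p n t) = cut p (min m n) t"
  by (rule ext) (auto simp: cut_def split: option.splits)

lemma cut_le_refl: "cut_le p x x"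
  by (simp add: cut_le_def)

lemma cut_le_trans: "cut_le p x y \<Longrightarrow> cut_le p y z \<Longrightarrow> cut_le p x z"
  unfolding cut_le_def by (auto simp: cut_cut)

lemma cut_le_antisym:
  assumes "cut_le p x y" "cut_le p y x"
  shows "x = y"
proof (rule ccontr)
  assume "x \<noteq> y"
  then obtain n m where x: "x = cut p n y" and y: "y = cut p m x"
    using assms unfolding cut_le_def by metis
  have y_cut: "y = cut p (min m n) y"
    using x y by (metis cut_cut)
  have "x = cut p n (cut p (min m n) y)"
    using x y_cut by metis
  also have "\<dots> = cut p (min m n) y"
    by (simp add: cut_cut min.commute)
  finally show False
    using y_cut \<open>x \<noteq> y\<close> by simp
qed

lemma cut_le_cut_self: "cut_le p (cut p n s) s"
  unfolding cut_le_def by blast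

lemma cut_le_cut_mono: "n \<le> m \<Longrightarrow> cut_le p (cut p n s) (cut p m s)"
  unfolding cut_le_def by (metis cut_cut min_absorb1)

lemma cut_le_partial_order: "partial_order_on' A (cut_le p)"
  unfolding partial_order_on'_def using cut_le_refl cut_le_antisym cut_le_trans by blast

lemma proper_cut_of_cut_le:
  assumes "cut_le p y u" "x = cut p n y" "x \<noteq> y"
  shows "x = cut p n u"
proof (cases "y = u")
  case False
  then obtain m where m: "y = cut p m u"
    using assms(1) unfolding cut_le_def by blast
  have "\<not> m \<le> n"
    using assms(2,3) m by (auto simp: cut_cut min_absorb2)
  then show ?thesis
    using assms(2) m by (simp add: cut_cut min_absorb1)
qed (use assms in simp)


lemma is_tree_take:
  assumes "is_tree \<Sigma> X t" "t w \<noteq> None"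
  shows "t (take k w) \<noteq> None"
  using assms(2)
proof (induction w rule: rev_induct)
  case (snoc i w)
  have "t w \<noteq> None"
    using snoc.prems assms(1) unfolding is_tree_def by blast
  then show ?case
    using snoc by (cases "k \<le> length w") auto
qed simp

lemma cut_eq_self_if_eq_lower_cut:
  assumes "is_tree \<Sigma> X y" "a < n" "cut p a y = cut p n y"
  shows "cut p n y = y"
proof (rule ccontr)
  assume "cut p n y \<noteq> y"
  then obtain w where "cut p n y w \<noteq> y w"
    by blast
  then have w: "length w \<ge> n" "y w \<noteq> None"
    by (cases "y w"; auto simp: cut_def split: if_splits)+
  let ?v = "take n w"
  \<comment> \<open>the node \<open>?v\<close> at height \<open>n\<close> is relabelled by \<open>\<partial>\<^sub>n\<close> but deleted by \<open>\<partial>\<^sub>a\<close>\<close>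
  have "y ?v \<noteq> None" "length ?v = n"
    using is_tree_take[OF assms(1) w(2)] w(1) by auto
  then have "cut p n y ?v = Some p"
    by (auto simp: cut_def split: option.splits)
  moreover have "cut p a y ?v = None"
    using \<open>length ?v = n\<close> assms(2) by (simp add: cut_def)
  ultimately show False
    using assms(3) by simp
qed

lemma finite_children:
  assumes "is_tree \<Sigma> X t"
  shows "finite {i. t (w @ [i]) \<noteq> None}"
proof (cases "t w")
  case None
  then have "{i. t (w @ [i]) \<noteq> None} = {}"
    using assms unfolding is_tree_def by blast
  then show ?thesis
    by simp
next
  case (Some l)
  show ?thesis
  proof (cases l)
    case (Inl a)
    obtain \<sigma> k where "a = (\<sigma>, k)"
      by fastforce
    then have "{i. t (w @ [i]) \<noteq> None} = {..<k}"
      using assms Some Inl unfolding is_tree_def by blast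
    then show ?thesis
      by simp
  next
    case (Inr x)
    then have "{i. t (w @ [i]) \<noteq> None} = {}"
      using assms Some unfolding is_tree_def by auto
    then show ?thesis
      by simp
  qed
qed

lemma finite_nodes_up_to_height:
  assumes "is_tree \<Sigma> X t"
  shows "finite {w. length w \<le> n \<and> t w \<noteq> None}"
proof (induction n)
  case 0
  have "{w. length w \<le> 0 \<and> t w \<noteq> None} \<subseteq> {[]}"
    by auto
  then show ?case
    using finite_subset by blast
next
  case (Suc n)
  let ?A = "{w. length w \<le> n \<and> t w \<noteq> None}"
  let ?C = "SIGMA w:?A. {i. t (w @ [i]) \<noteq> None}"
  have "{w. length w \<le> Suc n \<and> t w \<noteq> None} \<subseteq> ?A \<union> (\<lambda>(w, i). w @ [i]) ` ?C"
  proof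
    fix v
    assume v: "v \<in> {w. length w \<le> Suc n \<and> t w \<noteq> None}"
    show "v \<in> ?A \<union> (\<lambda>(w, i). w @ [i]) ` ?C"
    proof (cases "length v \<le> n")
      case False
      then have vv: "v = butlast v @ [last v]"
        by (metis append_butlast_last_id le0 list.size(3))
      have tv: "t (butlast v @ [last v]) \<noteq> None"
        using v vv by simp
      then have "t (butlast v) \<noteq> None"
        using assms unfolding is_tree_def by blast
      then have "(butlast v, last v) \<in> ?C"
        using v tv by auto
      then show ?thesis
        using vv by (metis (no_types, lifting) UnI2 case_prod_conv image_eqI)
    qed (use v in auto)
  qed
  moreover have "finite ?C"
    using Suc finite_children[OF assms] by blast
  ultimately show ?case
    using Suc by (meson finite_Un finite_imageI finite_subset)
qed

lemma is_tree_cut: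
  assumes p: "p \<in> nullary_labels \<Sigma> X" and t: "is_tree \<Sigma> X t"
  shows "is_tree \<Sigma> X (cut p n t)"
  unfolding is_tree_def
proof (intro conjI allI impI)
  show "cut p n t [] \<noteq> None"
    using t by (auto simp: cut_def is_tree_def split: option.splits)
next
  fix w i
  assume "cut p n t (w @ [i]) \<noteq> None"
  then show "cut p n t w \<noteq> None"
    using t by (auto simp: cut_def is_tree_def split: if_splits option.splits)
next
  fix w \<sigma> k i
  assume a: "cut p n t w = Some (Inl (\<sigma>, k))"
  show "\<sigma> \<in> \<Sigma> k"
    using a t p by (auto simp: cut_def is_tree_def nullary_labels_def split: if_splits option.splits)
  show "cut p n t (w @ [i]) \<noteq> None \<longleftrightarrow> i < k"
  proof (cases "length w < n")
    case True
    then have "t w = Some (Inl (\<sigma>, k))"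
      using a by (simp add: cut_def)
    then have "t (w @ [i]) \<noteq> None \<longleftrightarrow> i < k"
      using t by (simp add: is_tree_def)
    then show ?thesis
      using True by (auto simp: cut_def split: option.splits)
  next
    case False
    then have "length w = n" "p = Inl (\<sigma>, k)"
      using a by (auto simp: cut_def split: if_splits option.splits)
    then show ?thesis
      using p by (auto simp: cut_def nullary_labels_def)
  qed
next
  fix w x i
  assume a: "cut p n t w = Some (Inr x)"
  show "x \<in> X"
    using a t p by (auto simp: cut_def is_tree_def nullary_labels_def split: if_splits option.splits)
  show "cut p n t (w @ [i]) = None"
    using a t by (auto simp: cut_def is_tree_def split: if_splits option.splits)
qed

lemma cut_in_finite_trees:
  assumes "p \<in> nullary_labels \<Sigma> X" "t \<in> trees \<Sigma> X"
  shows "cut p n t \<in> finite_trees \<Sigma> X"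
proof -
  have T: "is_tree \<Sigma> X t"
    using assms(2) by (simp add: trees_def)
  have "dom (cut p n t) \<subseteq> {w. length w \<le> n \<and> t w \<noteq> None}"
    by (auto simp: cut_def split: if_splits option.splits)
  then show ?thesis
    using is_tree_cut[OF assms(1) T] finite_nodes_up_to_height[OF T, of n] finite_subset
    by (auto simp: finite_trees_def)
qed

lemma finite_trees_subset_trees: "finite_trees \<Sigma> X \<subseteq> trees \<Sigma> X"
  unfolding finite_trees_def trees_def by blast

lemma cut_finite_eventually_self:
  assumes "finite (dom t)"
  obtains N where "\<And>n. n \<ge> N \<Longrightarrow> cut p n t = t"
proof
  fix n
  assume "Suc (Max (length ` dom t)) \<le> n"
  moreover have "length w \<le> Max (length ` dom t)" if "t w \<noteq> None" for w
    using assms that by (simp add: domIff)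
  ultimately have "\<And>w. t w \<noteq> None \<Longrightarrow> length w < n"
    by fastforce
  then show "cut p n t = t"
    by (intro ext) (fastforce simp: cut_def split: option.splits)
qed

lemma is_tree_if_locally_tree:
  assumes "\<And>k. \<exists>s. is_tree \<Sigma> X s \<and> (\<forall>w. length w \<le> k \<longrightarrow> t w = s w)"
  shows "is_tree \<Sigma> X t"
proof -
  have near: "\<exists>s. is_tree \<Sigma> X s \<and> t w = s w \<and> (\<forall>i. t (w @ [i]) = s (w @ [i]))" for w
    using assms[of "Suc (length w)"] by auto
  show ?thesis
    unfolding is_tree_def
  proof (intro conjI allI impI)
    show "t [] \<noteq> None"
      using near[of "[]"] unfolding is_tree_def by auto
  next
    fix w i
    assume child: "t (w @ [i]) \<noteq> None"
    obtain s where "is_tree \<Sigma> X s" "t w = s w" "t (w @ [i]) = s (w @ [i])"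
      using near[of w] by blast
    then show "t w \<noteq> None"
      using child unfolding is_tree_def by metis
  next
    fix w \<sigma> n i
    assume node: "t w = Some (Inl (\<sigma>, n))"
    obtain s where s: "is_tree \<Sigma> X s" "t w = s w" "\<forall>i. t (w @ [i]) = s (w @ [i])"
      using near[of w] by blast
    then have "s w = Some (Inl (\<sigma>, n))"
      using node by simp
    then show "\<sigma> \<in> \<Sigma> n" "t (w @ [i]) \<noteq> None \<longleftrightarrow> i < n"
      using s unfolding is_tree_def by auto
  next
    fix w x i
    assume leaf: "t w = Some (Inr x)"
    obtain s where s: "is_tree \<Sigma> X s" "t w = s w" "\<forall>i. t (w @ [i]) = s (w @ [i])"
      using near[of w] by blast
    then have "s w = Some (Inr x)"
      using leaf by simp
    then show "x \<in> X" "t (w @ [i]) = None"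
      using s unfolding is_tree_def by auto
  qed
qed


section \<open>Directed joins of trees\<close>

definition has_greatest :: "('s, 'x) lab \<Rightarrow> ('s, 'x) tree set \<Rightarrow> bool" where
  "has_greatest p D \<longleftrightarrow> (\<exists>m\<in>D. \<forall>d\<in>D. cut_le p d m)"

definition proper_cut_at :: "('s, 'x) lab \<Rightarrow> ('s, 'x) tree set \<Rightarrow> ('s, 'x) tree \<Rightarrow> nat \<Rightarrow> bool" where
  "proper_cut_at p D x n \<longleftrightarrow> (\<exists>y\<in>D. x = cut p n y \<and> x \<noteq> y)"

text \<open>
  The join of a directed set without greatest element: its label at \<open>w\<close> is read off any member
  that is a proper cut at a level above \<open>length w\<close> (all such members agree there).
\<close>

definition directed_lim :: "('s, 'x) lab \<Rightarrow> ('s, 'x) tree set \<Rightarrow> ('s, 'x) tree" where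
  "directed_lim p D =
     (\<lambda>w. SOME v. \<exists>x\<in>D. \<exists>n. proper_cut_at p D x n \<and> length w < n \<and> x w = v)"

lemma is_join_greatest:
  assumes "directed A (cut_le p) D" "m \<in> D" "\<forall>d\<in>D. cut_le p d m"
  shows "is_join A (cut_le p) D m"
  using assms unfolding is_join_def directed_def by blast

lemma is_join_in_if_has_greatest:
  assumes "directed A (cut_le p) D" "is_join A (cut_le p) D j" "has_greatest p D"
  shows "j \<in> D"
proof -
  obtain m where m: "m \<in> D" "\<forall>d\<in>D. cut_le p d m"
    using assms(3) unfolding has_greatest_def by blast
  then have "cut_le p j m" "cut_le p m j"
    using assms(1,2) unfolding is_join_def directed_def by blast+
  then show ?thesis
    using m(1) cut_le_antisym by blast
qed

lemma proper_cut_at_if_not_has_greatest: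
  assumes "directed A (cut_le p) D" "\<not> has_greatest p D" "x \<in> D"
  obtains n where "proper_cut_at p D x n"
proof -
  obtain y where y: "y \<in> D" "\<not> cut_le p y x"
    using assms(2,3) unfolding has_greatest_def by blast
  obtain z where z: "z \<in> D" "cut_le p x z" "cut_le p y z"
    using assms(1,3) y(1) unfolding directed_def by blast
  then have "x \<noteq> z"
    using y by blast
  then show ?thesis
    using that z unfolding cut_le_def proper_cut_at_def by blast
qed

lemma proper_cut_at_unbounded:
  assumes "directed A (cut_le p) D" "\<not> has_greatest p D"
  shows "\<exists>x\<in>D. \<exists>n\<ge>k. proper_cut_at p D x n"
proof (induction k)
  case 0
  obtain x where "x \<in> D"
    using assms(1) unfolding directed_def by blast
  moreover obtain n where "proper_cut_at p D x n"
    using proper_cut_at_if_not_has_greatest[OF assms \<open>x \<in> D\<close>] by blast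
  ultimately show ?case
    by blast
next
  case (Suc k)
  then obtain x n y where x: "n \<ge> k" and y: "y \<in> D" "x = cut p n y" "x \<noteq> y"
    unfolding proper_cut_at_def by blast
  obtain m where m: "proper_cut_at p D y m"
    using proper_cut_at_if_not_has_greatest[OF assms y(1)] by blast
  then obtain z where z: "y = cut p m z" "y \<noteq> z"
    unfolding proper_cut_at_def by blast
  \<comment> \<open>if \<open>m \<le> n\<close> then \<open>x = \<partial>\<^sub>n \<partial>\<^sub>m z = y\<close>\<close>
  have "m > n"
  proof (rule ccontr)
    assume "\<not> m > n"
    then have "x = y"
      using y z by (simp add: cut_cut min_absorb2)
    then show False
      using y(3) by simp
  qed
  then have "m \<ge> Suc k"
    using x by simp
  then show ?case
    using y(1) m by blast
qed

lemma proper_cut_at_upper_bound: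
  assumes "proper_cut_at p D x n" "\<forall>d\<in>D. cut_le p d u"
  shows "x = cut p n u"
  using assms proper_cut_of_cut_le unfolding proper_cut_at_def by blast

lemma proper_cut_at_le_member:
  assumes D: "directed (trees \<Sigma> X) (cut_le p) D"
    and x: "proper_cut_at p D x n" and z: "z \<in> D" "cut_le p x z"
  shows "x = cut p n z"
proof -
  obtain y where y: "y \<in> D" "x = cut p n y" "x \<noteq> y"
    using x unfolding proper_cut_at_def by blast
  obtain v where v: "v \<in> D" "cut_le p y v" "cut_le p z v"
    using D y(1) z(1) unfolding directed_def by blast
  have v_tree: "is_tree \<Sigma> X v"
    using D v(1) unfolding directed_def trees_def by blast
  have xv: "x = cut p n v"
    using proper_cut_of_cut_le[OF v(2) y(2,3)] .
  show ?thesis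
  proof (cases "z = v \<or> x = z")
    case True
    then show ?thesis
      using xv by (auto simp: cut_cut)
  next
    case False
    then obtain m k where m: "z = cut p m v" and k: "x = cut p k z"
      using v(3) z(2) unfolding cut_le_def by blast
    show ?thesis
    proof (rule ccontr)
      assume "x \<noteq> cut p n z"
      then have "m < n"
        using xv m by (auto simp: cut_cut min_absorb1)
      \<comment> \<open>then \<open>x = \<partial>\<^sub>n v\<close> is also a lower cut of \<open>v\<close>, so \<open>x = v\<close>, although \<open>x < y \<le> v\<close>\<close>
      then have "cut p (min k m) v = cut p n v" "min k m < n"
        using m k xv by (auto simp: cut_cut)
      then have "x = v"
        using cut_eq_self_if_eq_lower_cut[OF v_tree] xv by metis
      then show False
        using v(2) y cut_le_cut_self cut_le_antisym by metis
    qed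
  qed
qed

lemma directed_lim_eq:
  assumes D: "directed (trees \<Sigma> X) (cut_le p) D"
    and x: "x \<in> D" "proper_cut_at p D x n" "length w < n"
  shows "directed_lim p D w = x w"
proof -
  have "\<exists>x\<in>D. \<exists>n. proper_cut_at p D x n \<and> length w < n \<and> x w = directed_lim p D w"
    unfolding directed_lim_def by (rule someI_ex) (use x in blast)
  then obtain x' n' where x': "x' \<in> D" "proper_cut_at p D x' n'" "length w < n'"
      "x' w = directed_lim p D w"
    by blast
  obtain z where z: "z \<in> D" "cut_le p x z" "cut_le p x' z"
    using D x(1) x'(1) unfolding directed_def by blast
  have "x = cut p n z" "x' = cut p n' z"
    using proper_cut_at_le_member[OF D] x z x' by blast+
  then show ?thesis
    using x(3) x'(3,4) by (simp add: cut_def)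
qed

lemma directed_lim_agrees_with_member:
  assumes D: "directed (trees \<Sigma> X) (cut_le p) D" "\<not> has_greatest p D"
  obtains x n where "x \<in> D" "proper_cut_at p D x n" "n > k"
    "\<And>w. length w \<le> k \<Longrightarrow> directed_lim p D w = x w"
proof -
  obtain x n where x: "x \<in> D" "n \<ge> Suc k" "proper_cut_at p D x n"
    using proper_cut_at_unbounded[OF D] by blast
  then show ?thesis
    using that directed_lim_eq[OF D(1) x(1,3)] by simp
qed

lemma directed_lim_in_trees:
  assumes D: "directed (trees \<Sigma> X) (cut_le p) D" "\<not> has_greatest p D"
  shows "directed_lim p D \<in> trees \<Sigma> X"
proof -
  have "\<exists>s. is_tree \<Sigma> X s \<and> (\<forall>w. length w \<le> k \<longrightarrow> directed_lim p D w = s w)" for k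
  proof -
    obtain x where "x \<in> D" "\<And>w. length w \<le> k \<Longrightarrow> directed_lim p D w = x w"
      using directed_lim_agrees_with_member[OF D] by metis
    moreover have "is_tree \<Sigma> X x"
      using D(1) \<open>x \<in> D\<close> unfolding directed_def trees_def by blast
    ultimately show ?thesis
      by blast
  qed
  then show ?thesis
    using is_tree_if_locally_tree unfolding trees_def by blast
qed

lemma directed_lim_upper:
  assumes D: "directed (trees \<Sigma> X) (cut_le p) D" "\<not> has_greatest p D" and x: "x \<in> D"
  shows "cut_le p x (directed_lim p D)"
proof -
  obtain n where n: "proper_cut_at p D x n"
    using proper_cut_at_if_not_has_greatest[OF D x] by blast
  have "x w = cut p n (directed_lim p D) w" for w
  proof -
    obtain x' n' where x': "x' \<in> D" "proper_cut_at p D x' n'" "n' > max n (length w)"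
        "\<And>v. length v \<le> max n (length w) \<Longrightarrow> directed_lim p D v = x' v"
      using directed_lim_agrees_with_member[OF D] by blast
    obtain z where z: "z \<in> D" "cut_le p x z" "cut_le p x' z"
      using D x x'(1) unfolding directed_def by blast
    have "x = cut p n z" "x' = cut p n' z"
      using proper_cut_at_le_member[OF D(1)] n x' z by blast+
    then show ?thesis
      using x'(3,4) by (auto simp: cut_def)
  qed
  then show ?thesis
    using cut_le_cut_self[of p n "directed_lim p D"] by presburger
qed

lemma upper_bound_unique_if_not_has_greatest:
  assumes D: "directed A (cut_le p) D" "\<not> has_greatest p D"
    and u: "\<forall>d\<in>D. cut_le p d u" and u': "\<forall>d\<in>D. cut_le p d u'"
  shows "u = u'"
proof
  fix w :: "nat list"
  obtain x n where x: "n \<ge> Suc (length w)" "proper_cut_at p D x n"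
    using proper_cut_at_unbounded[OF D] by blast
  then have "cut p n u = cut p n u'"
    using proper_cut_at_upper_bound u u' by metis
  moreover have "cut p n u w = u w" "cut p n u' w = u' w"
    using x(1) by (simp_all add: cut_def)
  ultimately show "u w = u' w"
    by metis
qed

lemma cpo_trees: "cpo (trees \<Sigma> X) (cut_le p)"
  unfolding cpo_def
proof (intro conjI allI impI)
  show "partial_order_on' (trees \<Sigma> X) (cut_le p)"
    by (rule cut_le_partial_order)
next
  fix D
  assume D: "directed (trees \<Sigma> X) (cut_le p) D"
  show "\<exists>j. is_join (trees \<Sigma> X) (cut_le p) D j"
  proof (cases "has_greatest p D")
    case True
    then show ?thesis
      using is_join_greatest[OF D] unfolding has_greatest_def by blast
  next
    case False
    have "is_join (trees \<Sigma> X) (cut_le p) D (directed_lim p D)"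
      unfolding is_join_def
      using directed_lim_in_trees[OF D False] directed_lim_upper[OF D False]
        upper_bound_unique_if_not_has_greatest[OF D False] cut_le_refl
      by metis
    then show ?thesis
      by blast
  qed
qed

lemma cut_is_join_eq_cut_member:
  assumes D: "directed A (cut_le p) D" "is_join A (cut_le p) D j"
  shows "\<exists>x\<in>D. cut p n j = cut p n x"
proof (cases "has_greatest p D")
  case True
  then show ?thesis
    using is_join_in_if_has_greatest[OF D] by blast
next
  case False
  obtain x k where x: "x \<in> D" "k \<ge> n" "proper_cut_at p D x k"
    using proper_cut_at_unbounded[OF D(1) False] by blast
  have "x = cut p k j"
    using D(2) proper_cut_at_upper_bound[OF x(3)] unfolding is_join_def by blast
  then show ?thesis
    using x(1,2) by (metis cut_cut min_absorb1)
qed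

lemma finite_trees_closed_under_directed_joins:
  "closed_under_directed_joins (finite_trees \<Sigma> X) (trees \<Sigma> X) (cut_le p)"
  unfolding closed_under_directed_joins_def
proof (intro allI impI, elim conjE)
  fix D j
  assume D: "directed (finite_trees \<Sigma> X) (cut_le p) D"
    and j: "is_join (finite_trees \<Sigma> X) (cut_le p) D j"
  have upper: "\<forall>d\<in>D. cut_le p d j"
    using j unfolding is_join_def by blast
  have "has_greatest p D"
  proof (rule ccontr)
    assume no_greatest: "\<not> has_greatest p D"
    have "finite (dom j)"
      using j unfolding is_join_def finite_trees_def by blast
    then obtain N where N: "\<And>n. n \<ge> N \<Longrightarrow> cut p n j = j"
      using cut_finite_eventually_self by blast
    obtain x k where x: "x \<in> D" "k \<ge> N" "proper_cut_at p D x k"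
      using proper_cut_at_unbounded[OF D no_greatest] by blast
    then have "x = j"
      using proper_cut_at_upper_bound[OF x(3) upper] N by simp
    then show False
      using no_greatest x(1) upper unfolding has_greatest_def by blast
  qed
  then show "is_join (trees \<Sigma> X) (cut_le p) D j"
    using is_join_greatest directed_subset[OF D finite_trees_subset_trees]
      is_join_in_if_has_greatest[OF D j] upper
    by blast
qed


section \<open>Every tree is the directed join of its cuts\<close>

lemma directed_cuts:
  assumes "\<And>n. cut p n s \<in> A"
  shows "directed A (cut_le p) {cut p n s | n. True}"
  unfolding directed_def
proof (intro conjI ballI)
  fix a b
  assume "a \<in> {cut p n s | n. True}" "b \<in> {cut p n s | n. True}"
  then obtain n m where "a = cut p n s" "b = cut p m s"
    by blast
  then show "\<exists>z\<in>{cut p n s | n. True}. cut_le p a z \<and> cut_le p b z"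
    using cut_le_cut_mono[of n "max n m" p s] cut_le_cut_mono[of m "max n m" p s] by auto
qed (use assms in auto)

lemma not_has_greatest_cuts:
  assumes "is_tree \<Sigma> X s" "\<And>n. cut p n s \<noteq> s"
  shows "\<not> has_greatest p {cut p n s | n. True}"
proof
  assume "has_greatest p {cut p n s | n. True}"
  then obtain N where le: "cut_le p (cut p (Suc N) s) (cut p N s)"
    unfolding has_greatest_def by blast
  have "\<exists>a<Suc N. cut p a s = cut p (Suc N) s"
  proof (cases "cut p (Suc N) s = cut p N s")
    case False
    then obtain k where "cut p (Suc N) s = cut p k (cut p N s)"
      using le unfolding cut_le_def by blast
    then show ?thesis
      by (metis cut_cut le_imp_less_Suc min.cobounded2)
  qed auto
  then obtain a where "a < Suc N" "cut p a s = cut p (Suc N) s"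
    by blast
  then show False
    using cut_eq_self_if_eq_lower_cut[OF assms(1)] assms(2) by blast
qed

lemma is_join_cuts:
  assumes p: "p \<in> nullary_labels \<Sigma> X" and s: "s \<in> trees \<Sigma> X"
  shows "is_join (trees \<Sigma> X) (cut_le p) {cut p n s | n. True} s"
  unfolding is_join_def
proof (intro conjI ballI impI)
  let ?D = "{cut p n s | n. True}"
  fix u
  assume u: "u \<in> trees \<Sigma> X" "\<forall>x\<in>?D. cut_le p x u"
  show "cut_le p s u"
  proof (cases "\<exists>n. cut p n s = s")
    case True
    then obtain n where "cut p n s = s"
      by blast
    then have "s \<in> ?D"
      by (intro CollectI exI[of _ n]) simp
    then show ?thesis
      using u(2) by blast
  next
    case False
    have "directed (trees \<Sigma> X) (cut_le p) ?D"
      using directed_cuts cut_in_finite_trees[OF p s] finite_trees_subset_trees by blast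
    moreover have "\<not> has_greatest p ?D"
      using not_has_greatest_cuts False s unfolding trees_def by blast
    ultimately have "u = s"
      using upper_bound_unique_if_not_has_greatest u(2) cut_le_cut_self by blast
    then show ?thesis
      using cut_le_refl by simp
  qed
qed (use s cut_le_cut_self in auto)


section \<open>The continuous extension\<close>

definition cut_extension ::
    "'q set \<Rightarrow> ('q \<Rightarrow> 'q \<Rightarrow> bool) \<Rightarrow> ('s, 'x) lab \<Rightarrow> (('s, 'x) tree \<Rightarrow> 'q) \<Rightarrow> ('s, 'x) tree \<Rightarrow> 'q"
  where "cut_extension Q leQ p f s = (SOME j. is_join Q leQ {f (cut p n s) | n. True} j)"

context
  fixes \<Sigma> :: "nat \<Rightarrow> 's set" and X :: "'x set" and p :: "('s, 'x) lab"
    and Q :: "'q set" and leQ :: "'q \<Rightarrow> 'q \<Rightarrow> bool" and f :: "('s, 'x) tree \<Rightarrow> 'q"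
  assumes p: "p \<in> nullary_labels \<Sigma> X"
    and Q: "cpo Q leQ"
    and f: "continuous_map (finite_trees \<Sigma> X) (cut_le p) Q leQ f"
begin

lemma directed_image_cuts:
  assumes "s \<in> trees \<Sigma> X"
  shows "directed Q leQ {f (cut p n s) | n. True}"
  unfolding directed_def
proof (intro conjI ballI)
  show "{f (cut p n s) | n. True} \<subseteq> Q"
    using continuous_map_into[OF f] cut_in_finite_trees[OF p assms] by blast
  fix a b
  assume "a \<in> {f (cut p n s) | n. True}" "b \<in> {f (cut p n s) | n. True}"
  then obtain n m where "a = f (cut p n s)" "b = f (cut p m s)"
    by blast
  moreover have "leQ (f (cut p k s)) (f (cut p (max n m) s))" if "k \<le> max n m" for k
    using continuous_map_mono[OF f] cut_in_finite_trees[OF p assms] cut_le_cut_mono[OF that]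
    by blast
  ultimately show "\<exists>z\<in>{f (cut p n s) | n. True}. leQ a z \<and> leQ b z"
    by (intro bexI[of _ "f (cut p (max n m) s)"]) auto
qed auto

lemma is_join_cut_extension:
  assumes "s \<in> trees \<Sigma> X"
  shows "is_join Q leQ {f (cut p n s) | n. True} (cut_extension Q leQ p f s)"
proof -
  have "\<exists>j. is_join Q leQ {f (cut p n s) | n. True} j"
    using Q directed_image_cuts[OF assms] unfolding cpo_def by blast
  then show ?thesis
    unfolding cut_extension_def by (rule someI_ex)
qed

lemma cut_extension_in: "s \<in> trees \<Sigma> X \<Longrightarrow> cut_extension Q leQ p f s \<in> Q"
  using is_join_cut_extension unfolding is_join_def by blast

lemma cut_extension_eq:
  assumes s: "s \<in> finite_trees \<Sigma> X"
  shows "cut_extension Q leQ p f s = f s"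
proof -
  have sT: "s \<in> trees \<Sigma> X"
    using s finite_trees_subset_trees by blast
  obtain N where N: "\<And>n. n \<ge> N \<Longrightarrow> cut p n s = s"
    using s cut_finite_eventually_self unfolding finite_trees_def by blast
  have "is_join Q leQ {f (cut p n s) | n. True} (f s)"
    unfolding is_join_def
  proof (intro conjI ballI impI)
    show "f s \<in> Q"
      using continuous_map_into[OF f s] .
    show "leQ x (f s)" if x: "x \<in> {f (cut p n s) | n. True}" for x
    proof -
      obtain n where "x = f (cut p n s)"
        using x by blast
      then show ?thesis
        using continuous_map_mono[OF f] cut_in_finite_trees[OF p sT] s cut_le_cut_self by blast
    qed
    show "leQ (f s) u" if "\<forall>x\<in>{f (cut p n s) | n. True}. leQ x u" for u
    proof -
      have "leQ (f (cut p N s)) u"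
        using that by blast
      then show ?thesis
        using N[of N] by simp
    qed
  qed
  then show ?thesis
    using is_join_unique[OF partial_order_if_cpo[OF Q] is_join_cut_extension[OF sT]] by blast
qed

lemma cut_extension_mono:
  assumes st: "s \<in> trees \<Sigma> X" "t \<in> trees \<Sigma> X" "cut_le p s t"
  shows "leQ (cut_extension Q leQ p f s) (cut_extension Q leQ p f t)"
proof (cases "s = t")
  case True
  then show ?thesis
    using partial_order_on'_refl[OF partial_order_if_cpo[OF Q] cut_extension_in[OF st(1)]] by simp
next
  case False
  then obtain m where m: "s = cut p m t"
    using st(3) unfolding cut_le_def by blast
  \<comment> \<open>the cuts of \<open>s = \<partial>\<^sub>m t\<close> are cuts of \<open>t\<close>\<close>
  have "\<forall>y\<in>{f (cut p n s) | n. True}. leQ y (cut_extension Q leQ p f t)"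
    using is_join_cut_extension[OF st(2)] m unfolding is_join_def by (auto simp: cut_cut)
  then show ?thesis
    using is_join_cut_extension[OF st(1)] cut_extension_in[OF st(2)] unfolding is_join_def by blast
qed

lemma continuous_cut_extension:
  "continuous_map (trees \<Sigma> X) (cut_le p) Q leQ (cut_extension Q leQ p f)"
  unfolding continuous_map_def
proof (intro conjI allI impI ballI)
  show "cut_extension Q leQ p f ` trees \<Sigma> X \<subseteq> Q"
    using cut_extension_in by blast
  show "leQ (cut_extension Q leQ p f x) (cut_extension Q leQ p f y)"
    if "x \<in> trees \<Sigma> X" "y \<in> trees \<Sigma> X" "cut_le p x y" for x y
    using cut_extension_mono that .
next
  fix D j
  assume "directed (trees \<Sigma> X) (cut_le p) D \<and> is_join (trees \<Sigma> X) (cut_le p) D j"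
  then have D: "directed (trees \<Sigma> X) (cut_le p) D" and j: "is_join (trees \<Sigma> X) (cut_le p) D j"
    by auto
  have DT: "D \<subseteq> trees \<Sigma> X" and jT: "j \<in> trees \<Sigma> X"
    using D j unfolding directed_def is_join_def by auto
  show "is_join Q leQ (cut_extension Q leQ p f ` D) (cut_extension Q leQ p f j)"
    unfolding is_join_def
  proof (intro conjI ballI impI)
    show "cut_extension Q leQ p f j \<in> Q"
      using cut_extension_in[OF jT] .
    show "leQ y (cut_extension Q leQ p f j)" if y: "y \<in> cut_extension Q leQ p f ` D" for y
    proof -
      obtain x where x: "x \<in> D" "y = cut_extension Q leQ p f x"
        using y by blast
      then have "cut_le p x j"
        using j unfolding is_join_def by blast
      then show ?thesis
        using cut_extension_mono x DT jT by blast
    qed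
  next
    fix u
    assume u: "u \<in> Q" "\<forall>y\<in>cut_extension Q leQ p f ` D. leQ y u"
    have "leQ (f (cut p n j)) u" for n
    proof -
      obtain x where x: "x \<in> D" "cut p n j = cut p n x"
        using cut_is_join_eq_cut_member[OF D j] by blast
      have xT: "x \<in> trees \<Sigma> X"
        using x(1) DT by blast
      have "leQ (f (cut p n x)) (cut_extension Q leQ p f x)"
        using is_join_cut_extension[OF xT] unfolding is_join_def by blast
      moreover have "leQ (cut_extension Q leQ p f x) u"
        using u x(1) by blast
      moreover have "f (cut p n x) \<in> Q"
        using continuous_map_into[OF f] cut_in_finite_trees[OF p xT] .
      ultimately show ?thesis
        using partial_order_on'_trans[OF partial_order_if_cpo[OF Q]] cut_extension_in[OF xT] u(1) x(2)
        by metis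
    qed
    then show "leQ (cut_extension Q leQ p f j) u"
      using is_join_cut_extension[OF jT] u(1) unfolding is_join_def by blast
  qed
qed

end

lemma continuous_extension_unique:
  assumes p: "p \<in> nullary_labels \<Sigma> X" and Q: "partial_order_on' Q leQ"
    and g: "continuous_map (trees \<Sigma> X) (cut_le p) Q leQ g"
    and g': "continuous_map (trees \<Sigma> X) (cut_le p) Q leQ g'"
    and eq: "\<forall>s\<in>finite_trees \<Sigma> X. g s = g' s"
    and s: "s \<in> trees \<Sigma> X"
  shows "g s = g' s"
proof -
  let ?D = "{cut p n s | n. True}"
  have D: "directed (trees \<Sigma> X) (cut_le p) ?D"
    using directed_cuts cut_in_finite_trees[OF p s] finite_trees_subset_trees by blast
  have "g ` ?D = g' ` ?D"
    by (intro image_cong refl) (use eq cut_in_finite_trees[OF p s] in blast)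
  then have "is_join Q leQ (g ` ?D) (g s)" "is_join Q leQ (g ` ?D) (g' s)"
    using continuous_map_join[OF g D is_join_cuts[OF p s]]
      continuous_map_join[OF g' D is_join_cuts[OF p s]] by simp_all
  then show ?thesis
    by (rule is_join_unique[OF Q])
qed


theorem mainTheorem3:
  fixes \<Sigma> :: "nat \<Rightarrow> 's set" and X :: "'x set" and p :: "('s, 'x) lab"
  assumes "p \<in> nullary_labels \<Sigma> X"
  shows "cpo (trees \<Sigma> X) (cut_le p)
       \<and> finite_trees \<Sigma> X \<subseteq> trees \<Sigma> X
       \<and> closed_under_directed_joins (finite_trees \<Sigma> X) (trees \<Sigma> X) (cut_le p)
       \<and> (\<forall>(Q :: 'q set) leQ f.
            cpo Q leQ \<and> continuous_map (finite_trees \<Sigma> X) (cut_le p) Q leQ f \<longrightarrow>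
              (\<exists>g. continuous_map (trees \<Sigma> X) (cut_le p) Q leQ g
                   \<and> (\<forall>s\<in>finite_trees \<Sigma> X. g s = f s)
                   \<and> (\<forall>s\<in>trees \<Sigma> X. is_join Q leQ {f (cut p n s) | n. True} (g s)))
            \<and> (\<forall>g g'. continuous_map (trees \<Sigma> X) (cut_le p) Q leQ g
                   \<and> (\<forall>s\<in>finite_trees \<Sigma> X. g s = f s)
                   \<and> continuous_map (trees \<Sigma> X) (cut_le p) Q leQ g'
                   \<and> (\<forall>s\<in>finite_trees \<Sigma> X. g' s = f s)
                   \<longrightarrow> (\<forall>s\<in>trees \<Sigma> X. g s = g' s)))"
proof (intro conjI allI impI; (elim conjE)?)
  show "cpo (trees \<Sigma> X) (cut_le p)"
    by (rule cpo_trees)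
  show "finite_trees \<Sigma> X \<subseteq> trees \<Sigma> X"
    by (rule finite_trees_subset_trees)
  show "closed_under_directed_joins (finite_trees \<Sigma> X) (trees \<Sigma> X) (cut_le p)"
    by (rule finite_trees_closed_under_directed_joins)
next
  fix Q :: "'q set" and leQ f
  assume Q: "cpo Q leQ" and f: "continuous_map (finite_trees \<Sigma> X) (cut_le p) Q leQ f"
  show "\<exists>g. continuous_map (trees \<Sigma> X) (cut_le p) Q leQ g
                   \<and> (\<forall>s\<in>finite_trees \<Sigma> X. g s = f s)
                   \<and> (\<forall>s\<in>trees \<Sigma> X. is_join Q leQ {f (cut p n s) | n. True} (g s))"
  proof (intro exI conjI ballI)
    show "continuous_map (trees \<Sigma> X) (cut_le p) Q leQ (cut_extension Q leQ p f)"
      by (rule continuous_cut_extension[OF assms Q f])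
    show "cut_extension Q leQ p f s = f s" if "s \<in> finite_trees \<Sigma> X" for s
      using cut_extension_eq[OF assms Q f that] .
    show "is_join Q leQ {f (cut p n s) | n. True} (cut_extension Q leQ p f s)"
      if "s \<in> trees \<Sigma> X" for s
      using is_join_cut_extension[OF assms Q f that] .
  qed
next
  fix Q :: "'q set" and leQ f g g'
  assume Q: "cpo Q leQ"
    and g: "continuous_map (trees \<Sigma> X) (cut_le p) Q leQ g" "\<forall>s\<in>finite_trees \<Sigma> X. g s = f s"
    and g': "continuous_map (trees \<Sigma> X) (cut_le p) Q leQ g'" "\<forall>s\<in>finite_trees \<Sigma> X. g' s = f s"
  show "\<forall>s\<in>trees \<Sigma> X. g s = g' s"
    using continuous_extension_unique[OF assms partial_order_if_cpo[OF Q] g(1) g'(1)] g(2) g'(2)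
    by simp
qed

end
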